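(* Let $k>0$. On $\mathbb{C}\times\mathcal{D}_1$ consider the system $$2k\ddot z-\bar\eta\dot z^2+2\Big(2k\frac{\bar w}{P}-\bar\eta^2\Big)\dot z\dot w-\bar\eta^3\dot w^2=0,\qquad 2k\ddot w+\dot z^2+2\bar\eta\dot z\dot w+\Big(4k\frac{\bar w}{P}+\bar\eta^2\Big)\dot w^2=0,$$ where $P=1-|w|^2$ and $\eta=\frac{z+\bar zw}{1-|w|^2}$. For any $\eta_0\in\mathbb{C}$ and $B\in\mathbb{C}\setminus\{0\}$, the curve $w(t)=B\,\frac{\tanh(t|B|)}{|B|}$, $z(t)=\eta_0-w(t)\bar\eta_0$ is a solution of this system (along it $\eta(t)\equiv\eta_0$ is constant).
   Context: $\mathcal{D}_1=\{w\in\mathbb{C}:|w|<1\}$. The displayed system is the geodesic equation of the Kähler metric on the Siegel–Jacobi disk with Kähler form $\omega_1=\mathrm{i}\big[\frac{2k}{(1-|w|^2)^2}dw\wedge d\bar w+\frac{A\wedge\bar A}{1-|w|^2}\big]$, $A=dz+\bar\eta dw$. *)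

theory Defs
  imports "HOL-Analysis.Analysis"
begin

definition Pfun :: "complex \<Rightarrow> complex" where
  "Pfun w = 1 - complex_of_real ((cmod w)\<^sup>2)"

definition eta :: "complex \<Rightarrow> complex \<Rightarrow> complex" where
  "eta z w = (z + cnj z * w) / Pfun w"

text \<open>The geodesic system, evaluated at position (z,w), velocity (z1,w1), acceleration (z2,w2).\<close>
definition geod_eq1 :: "real \<Rightarrow> complex \<Rightarrow> complex \<Rightarrow> complex \<Rightarrow> complex \<Rightarrow> complex \<Rightarrow> complex \<Rightarrow> bool" where
  "geod_eq1 k z w z1 w1 z2 w2 \<longleftrightarrow>
     (let eb = cnj (eta z w); P = Pfun w in
      2 * of_real k * z2 - eb * z1\<^sup>2 + 2 * (2 * of_real k * cnj w / P - eb\<^sup>2) * z1 * w1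
        - eb ^ 3 * w1\<^sup>2 = 0)"

definition geod_eq2 :: "real \<Rightarrow> complex \<Rightarrow> complex \<Rightarrow> complex \<Rightarrow> complex \<Rightarrow> complex \<Rightarrow> complex \<Rightarrow> bool" where
  "geod_eq2 k z w z1 w1 z2 w2 \<longleftrightarrow>
     (let eb = cnj (eta z w); P = Pfun w in
      2 * of_real k * w2 + z1\<^sup>2 + 2 * eb * z1 * w1
        + (4 * of_real k * cnj w / P + eb\<^sup>2) * w1\<^sup>2 = 0)"

end

theory Submission imports Defs begin

(* For fixed eta0, the map w \<mapsto> (eta0 - w * cnj eta0, w) parametrises the
   set {eta = eta0} over the unit disk: eta is constant there.  Along a curve of this form
   with z' = - w' * cnj eta0 and z'' = - w'' * cnj eta0, both geodesic equations of the
   Siegel-Jacobi disk become multiples of the single geodesic equation of the Poincare disk,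
     w'' + 2 * cnj w * w'^2 / (1 - |w|^2) = 0.
   The file first establishes these two reductions (eta on the fibre; reduction of the
   system), then verifies that the radial curve w(t) = B * tanh(t |B|) / |B| stays in the
   disk and solves the Poincare disk equation, and finally combines everything. *)

lemma Pfun_nonzero:
  assumes "cmod w < 1"
  shows "Pfun w \<noteq> 0"
proof -
  have "(cmod w)\<^sup>2 \<noteq> 1" using assms by (simp add: abs_square_eq_1)
  then have "complex_of_real ((cmod w)\<^sup>2) \<noteq> 1" by (metis of_real_eq_1_iff)
  then show ?thesis by (metis Pfun_def right_minus_eq)
qed

text \<open>The geodesic equation of the Poincare disk (with metric |dw|^2 / P^2),
  at position w, velocity w1 and acceleration w2.\<close>
definition disk_geod :: "complex \<Rightarrow> complex \<Rightarrow> complex \<Rightarrow> bool" where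
  "disk_geod w w1 w2 \<longleftrightarrow> w2 + 2 * cnj w * w1\<^sup>2 / Pfun w = 0"

lemma eta_on_fibre:
  assumes "cmod w < 1"
  shows "eta (e - w * cnj e) w = e"
proof -
  have "(e - w * cnj e) + cnj (e - w * cnj e) * w = e * Pfun w"
    unfolding Pfun_def complex_norm_square by (simp add: algebra_simps)
  then show ?thesis using Pfun_nonzero[OF assms] by (simp add: eta_def)
qed

text \<open>Along the fibre both equations of the system are multiples of the Poincare disk
  equation; in particular a Poincare disk geodesic lifts to a solution of the system.\<close>
lemma geod_eqs_on_fibre:
  assumes "cmod w < 1" and "disk_geod w w1 w2"
  shows "geod_eq1 k (e - w * cnj e) w (- w1 * cnj e) w1 (- w2 * cnj e) w2"
    and "geod_eq2 k (e - w * cnj e) w (- w1 * cnj e) w1 (- w2 * cnj e) w2"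
proof -
  let ?D = "w2 + 2 * cnj w * w1\<^sup>2 / Pfun w"
  have D: "?D = 0" using assms(2) by (simp add: disk_geod_def)
  have eta: "eta (e - w * cnj e) w = e" using eta_on_fibre[OF assms(1)] .
  have "2 * of_real k * (- w2 * cnj e) - cnj e * (- w1 * cnj e)\<^sup>2
        + 2 * (2 * of_real k * cnj w / Pfun w - (cnj e)\<^sup>2) * (- w1 * cnj e) * w1
        - cnj e ^ 3 * w1\<^sup>2 = - cnj e * (2 * of_real k) * ?D"
    by (simp add: power2_eq_square power3_eq_cube algebra_simps)
  then show "geod_eq1 k (e - w * cnj e) w (- w1 * cnj e) w1 (- w2 * cnj e) w2"
    unfolding geod_eq1_def Let_def eta D by simp
  have "2 * of_real k * w2 + (- w1 * cnj e)\<^sup>2 + 2 * cnj e * (- w1 * cnj e) * w1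
        + (4 * of_real k * cnj w / Pfun w + (cnj e)\<^sup>2) * w1\<^sup>2 = 2 * of_real k * ?D"
    by (simp add: power2_eq_square algebra_simps)
  then show "geod_eq2 k (e - w * cnj e) w (- w1 * cnj e) w1 (- w2 * cnj e) w2"
    unfolding geod_eq2_def Let_def eta D by simp
qed

lemma tanh_scaled_deriv:
  fixes r :: real
  assumes "r \<noteq> 0"
  shows "((\<lambda>t. tanh (t * r) / r) has_real_derivative (1 - tanh (t * r) ^ 2)) (at t)"
  using assms by (auto intro!: derivative_eq_intros)

lemma sech_sq_deriv:
  fixes r :: real
  shows "((\<lambda>t. 1 - tanh (t * r) ^ 2) has_real_derivative
            (- 2 * r * tanh (t * r) * (1 - tanh (t * r) ^ 2))) (at t)"
  by (auto intro!: derivative_eq_intros)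

lemma tanh_disk_geodesic:
  fixes B :: complex
  assumes "B \<noteq> 0"
  defines "r \<equiv> cmod B"
  defines "w \<equiv> \<lambda>t::real. B * complex_of_real (tanh (t * r) / r)"
  defines "w1 \<equiv> \<lambda>t::real. B * complex_of_real (1 - tanh (t * r) ^ 2)"
  defines "w2 \<equiv> \<lambda>t::real. B * complex_of_real (- 2 * r * tanh (t * r) * (1 - tanh (t * r) ^ 2))"
  shows "cmod (w t) < 1"
    and "(w has_vector_derivative w1 t) (at t)"
    and "(w1 has_vector_derivative w2 t) (at t)"
    and "disk_geod (w t) (w1 t) (w2 t)"
proof -
  have r: "r > 0" using assms(1) by (simp add: r_def)
  define th where "th = tanh (t * r)"
  have th_bound: "\<bar>th\<bar> < 1"
    using tanh_real_bounds[of "t * r"] by (auto simp: th_def abs_less_iff)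
  have norm_w: "cmod (w t) = \<bar>th\<bar>"
    using r by (simp add: w_def th_def r_def norm_mult norm_divide)
  show "cmod (w t) < 1" using norm_w th_bound by simp
  show "(w has_vector_derivative w1 t) (at t)"
    unfolding w_def w1_def
    by (intro has_vector_derivative_mult_right has_vector_derivative_of_real tanh_scaled_deriv)
       (use r in simp)
  show "(w1 has_vector_derivative w2 t) (at t)"
    unfolding w1_def w2_def
    by (intro has_vector_derivative_mult_right has_vector_derivative_of_real sech_sq_deriv)
  text \<open>With p = 1 - th^2 = P we have w1 = B p and w2 = -2 r th B p, so the equation
    factors as B p (-2 r th + 2 cnj w B), and cnj w B = |B|^2 th / r = r th.\<close>
  define p where "p = complex_of_real (1 - th\<^sup>2)"
  have P: "Pfun (w t) = p" by (simp add: Pfun_def norm_w p_def)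
  have p_nz: "p \<noteq> 0"
    using th_bound abs_square_less_1[of th] unfolding p_def of_real_eq_0_iff by linarith
  have w1_t: "w1 t = B * p" and w2_t: "w2 t = B * of_real (- 2 * r * th) * p"
    by (simp_all add: w1_def w2_def p_def th_def)
  have BB: "cnj B * B = of_real (r\<^sup>2)"
    unfolding r_def complex_norm_square by (simp add: mult.commute)
  have cnj_w_B: "cnj (w t) * B = of_real (r * th)"
  proof -
    have "cnj (w t) * B = (cnj B * B) * of_real (th / r)"
      by (simp add: w_def th_def)
    also have "\<dots> = of_real (r\<^sup>2 * (th / r))"
      unfolding BB by simp
    also have "\<dots> = of_real (r * th)"
      using r by (simp add: power2_eq_square)
    finally show ?thesis .
  qed
  have "w2 t + 2 * cnj (w t) * (w1 t)\<^sup>2 / Pfun (w t)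
        = B * p * (of_real (- 2 * r * th) + 2 * (cnj (w t) * B))"
    using p_nz unfolding P w1_t w2_t by (simp add: field_simps power2_eq_square)
  also have "\<dots> = 0"
    unfolding cnj_w_B by simp
  finally show "disk_geod (w t) (w1 t) (w2 t)" by (simp add: disk_geod_def)
qed

theorem mainTheorem5:
  fixes k :: real and eta0 B :: complex
  assumes "k > 0" and "B \<noteq> 0"
  defines "w \<equiv> (\<lambda>t::real. B * complex_of_real (tanh (t * cmod B) / cmod B))"
  defines "z \<equiv> (\<lambda>t::real. eta0 - w t * cnj eta0)"
  shows "(\<forall>t. cmod (w t) < 1) \<and>
    (\<exists>z1 w1 z2 w2 :: real \<Rightarrow> complex.
      (\<forall>t. (z has_vector_derivative z1 t) (at t) \<and> (z1 has_vector_derivative z2 t) (at t) \<and>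
           (w has_vector_derivative w1 t) (at t) \<and> (w1 has_vector_derivative w2 t) (at t) \<and>
           geod_eq1 k (z t) (w t) (z1 t) (w1 t) (z2 t) (w2 t) \<and>
           geod_eq2 k (z t) (w t) (z1 t) (w1 t) (z2 t) (w2 t))) \<and>
    (\<forall>t. eta (z t) (w t) = eta0)"
proof -
  define w1 where "w1 = (\<lambda>t::real. B * complex_of_real (1 - tanh (t * cmod B) ^ 2))"
  define w2 where "w2 = (\<lambda>t::real. B * complex_of_real
                     (- 2 * cmod B * tanh (t * cmod B) * (1 - tanh (t * cmod B) ^ 2)))"
  have geo: "cmod (w t) < 1" "(w has_vector_derivative w1 t) (at t)"
    "(w1 has_vector_derivative w2 t) (at t)" "disk_geod (w t) (w1 t) (w2 t)" for t
    unfolding w_def w1_def w2_def by (rule tanh_disk_geodesic[OF assms(2)])+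
  have dz: "(z has_vector_derivative - w1 t * cnj eta0) (at t)" for t
    unfolding z_def
    using has_vector_derivative_diff[OF has_vector_derivative_const
            has_vector_derivative_mult_left[OF geo(2), of "cnj eta0"]]
    by simp
  have dz1: "((\<lambda>t. - w1 t * cnj eta0) has_vector_derivative - w2 t * cnj eta0) (at t)" for t
    using has_vector_derivative_minus[OF has_vector_derivative_mult_left[OF geo(3), of "cnj eta0"]]
    by simp
  show ?thesis
    using geo dz dz1 geod_eqs_on_fibre[OF geo(1) geo(4)] eta_on_fibre[OF geo(1)]
    unfolding z_def
    by (intro conjI exI[of _ "\<lambda>t. - w1 t * cnj eta0"] exI[of _ w1]
          exI[of _ "\<lambda>t. - w2 t * cnj eta0"] exI[of _ w2]) auto
qed

end
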